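(* Let $\Lambda^\omega_n$ be the ring of extended symmetric polynomials. Then $\Lambda^\omega_n$ is a free module of rank $2^n$ over $\Lambda_n$. Moreover, let $\tilde\omega_1,\dots,\tilde\omega_n\in\Lambda^\omega_n$ be any elements of the form $\tilde\omega_i=\omega_i+\sum_{j>i}f_{ij}\,\omega_j$ with $f_{ij}\in\mathcal P_n$ (such elements exist). Then multiplication in $\Lambda^\omega_n$ induces a ring isomorphism $$\Lambda_n\otimes_{\mathbb Q}\textstyle\bigwedge[\tilde\omega_1,\dots,\tilde\omega_n]\;\xrightarrow{\ \sim\ }\;\Lambda^\omega_n .$$
   Context: Let $\mathcal P_n=\mathbb Q[x_1,\dots,x_n]$ and $\Lambda_n=\mathcal P_n^{S_n}$ the ring of symmetric polynomials. The extended polynomial ring is $\mathcal P^\omega_n=\mathbb Q[x_1,\dots,x_n]\otimes_{\mathbb Q}\bigwedge[\omega_1,\dots,\omega_n]$, where the $\omega_i$ are odd (they anticommute with each other, square to zero, and commute with all $x_j$). The symmetric group $S_n$ acts on $\mathcal P^\omega_n$ by ring automorphisms determined, for the simple transpositions $s_i$ ($1\le i\le n-1$), by $s_i(x_j)=x_{s_i(j)}$ and $s_i(\omega_j)=\omega_j+\delta_{ij}(x_j-x_{j+1})\omega_{j+1}$. The extended divided difference operators are $\partial_i=(\mathrm{id}-s_i)/(x_i-x_{i+1})$ on $\mathcal P^\omega_n$. The ring of extended symmetric polynomials is $\Lambda^\omega_n=(\mathcal P^\omega_n)^{S_n}=\bigcap_{i=1}^{n-1}\ker\partial_i$. *)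

theory Defs
  imports Complex_Main "HOL-Library.Poly_Mapping"
begin

text \<open>Variable x_k is represented by the key k; the ring P_n consists of polynomials
whose monomials only involve x_1,...,x_n.\<close>

type_synonym mpoly = "(nat \<Rightarrow>\<^sub>0 nat) \<Rightarrow>\<^sub>0 rat"

definition Var :: "nat \<Rightarrow> mpoly" where
  "Var k = Poly_Mapping.single (Poly_Mapping.single k 1) 1"

definition Pn :: "nat \<Rightarrow> mpoly set" where
  "Pn n = {p. \<forall>m \<in> Poly_Mapping.keys p. Poly_Mapping.keys m \<subseteq> {1..n}}"

definition tr :: "nat \<Rightarrow> nat \<Rightarrow> nat" where
  "tr i k = (if k = i then i + 1 else if k = i + 1 then i else k)"

definition swap_vars :: "nat \<Rightarrow> mpoly \<Rightarrow> mpoly" where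
  "swap_vars i p = Poly_Mapping.map_key (\<lambda>m. Poly_Mapping.map_key (tr i) m) p"

definition Lam :: "nat \<Rightarrow> mpoly set" where
  "Lam n = {p \<in> Pn n. \<forall>i. 1 \<le> i \<and> i < n \<longrightarrow> swap_vars i p = p}"

text \<open>An element is given by its coefficients: f S is the coefficient of
omega_S = omega_(s_1) ... omega_(s_k) (s_1 < ... < s_k the elements of S).\<close>

type_synonym ext = "nat set \<Rightarrow> mpoly"

definition ext_carrier :: "nat \<Rightarrow> mpoly set \<Rightarrow> ext set" where
  "ext_carrier n R = {f. \<forall>S. (S \<subseteq> {1..n} \<longrightarrow> f S \<in> R) \<and> (\<not> S \<subseteq> {1..n} \<longrightarrow> f S = 0)}"

definition ext_add :: "ext \<Rightarrow> ext \<Rightarrow> ext" where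
  "ext_add f g = (\<lambda>S. f S + g S)"

definition ext_one :: ext where
  "ext_one = (\<lambda>S. if S = {} then 1 else 0)"

definition ext_scale :: "mpoly \<Rightarrow> ext \<Rightarrow> ext" where
  "ext_scale p f = (\<lambda>S. p * f S)"

text \<open>Sign of omega_S omega_T = sign * omega_(S union T) for disjoint S, T.\<close>
definition ext_sign :: "nat set \<Rightarrow> nat set \<Rightarrow> mpoly" where
  "ext_sign S T = (- 1) ^ card {(s, t). s \<in> S \<and> t \<in> T \<and> t < s}"

definition ext_mult :: "ext \<Rightarrow> ext \<Rightarrow> ext" where
  "ext_mult f g = (\<lambda>U. \<Sum>S \<in> Pow U. ext_sign S (U - S) * f S * g (U - S))"

definition ext_gen :: "nat \<Rightarrow> ext" where
  "ext_gen j = (\<lambda>S. if S = {j} then 1 else 0)"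

text \<open>The automorphism s_i of P^omega_n: s_i(x_j) = x_(s_i j),
s_i(omega_j) = omega_j + delta_ij (x_j - x_(j+1)) omega_(j+1).  On a basis
monomial p omega_S this gives s_i(p) omega_S, plus (if i in S, i+1 notin S)
s_i(p) (x_i - x_(i+1)) omega_(S - {i} + {i+1}) (no sign, as i+1 takes the
position of i in the increasing order).\<close>
definition ext_s :: "nat \<Rightarrow> ext \<Rightarrow> ext" where
  "ext_s i f = (\<lambda>U. swap_vars i (f U) +
      (if i + 1 \<in> U \<and> i \<notin> U
       then (Var i - Var (i + 1)) * swap_vars i (f (insert i (U - {i + 1})))
       else 0))"

definition LamOmega :: "nat \<Rightarrow> ext set" where
  "LamOmega n = {f \<in> ext_carrier n (Pn n). \<forall>i. 1 \<le> i \<and> i < n \<longrightarrow> ext_s i f = f}"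

definition ext_monom :: "(nat \<Rightarrow> ext) \<Rightarrow> nat set \<Rightarrow> ext" where
  "ext_monom w S = foldr ext_mult (map w (sorted_list_of_set S)) ext_one"

definition triangular_family :: "nat \<Rightarrow> (nat \<Rightarrow> ext) \<Rightarrow> bool" where
  "triangular_family n w \<longleftrightarrow> (\<forall>i \<in> {1..n}. \<exists>c. (\<forall>j. c j \<in> Pn n) \<and>
      w i = ext_add (ext_gen i)
              (\<lambda>S. \<Sum>j \<in> {i<..n}. ext_scale (c j) (ext_gen j) S))"

text \<open>The map Lambda_n tensor Exterior[w_1..w_n] -> P^omega_n induced by multiplication;
the source is represented as coefficient families c (c S = coefficient of w_S),
which is a ring via the same (super)commutative exterior multiplication ext_mult.\<close>
definition ext_eval :: "nat \<Rightarrow> (nat \<Rightarrow> ext) \<Rightarrow> ext \<Rightarrow> ext" where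
  "ext_eval n w c = (\<lambda>U. \<Sum>S \<in> Pow {1..n}. ext_scale (c S) (ext_monom w S) U)"

end

theory Submission
  imports Defs
begin

text \<open>
  The odd generators make P^omega_n an exterior algebra over P_n, and each s_i acts on it by a
  ring automorphism: s_i is the variable swap on coefficients followed by the substitution
  omega_i |-> omega_i + (x_i - x_(i+1)) omega_(i+1), and on elements supported in {1..n} this
  substitution is evaluation at a family of odd elements, which is multiplicative.

  For a triangular family w the products w_S = w_(s_1) ... w_(s_k) have coefficient 1 at omega_S
  and are otherwise supported on sets of larger index sum, so by elimination in order of index sum
  every element of P^omega_n is a unique P_n-combination of the w_S. If the w_i are invariant,
  s_i acts on such a combination through its coefficients alone, and uniqueness shows that the
  invariants are exactly the combinations with symmetric coefficients. An invariant triangular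
  family is w_i = sum_(j >= i) e_(j-i)(x_1, ..., x_(j-1)) omega_j; its invariance under s_m is the
  recursion e_(k+1)(x_1..x_m) = s_m e_(k+1)(x_1..x_m) + (x_m - x_(m+1)) e_k(x_1..x_(m-1)).
\<close>

lemma tr_tr [simp]: "tr i (tr i k) = k"
  by (auto simp: tr_def)

lemma inj_tr: "inj (tr i)"
  by (metis injI tr_tr)

definition tr_exps :: "nat \<Rightarrow> (nat \<Rightarrow>\<^sub>0 nat) \<Rightarrow> (nat \<Rightarrow>\<^sub>0 nat)" where
  "tr_exps i = Poly_Mapping.map_key (tr i)"

lemma lookup_tr_exps: "Poly_Mapping.lookup (tr_exps i m) k = Poly_Mapping.lookup m (tr i k)"
  by (simp add: tr_exps_def map_key.rep_eq[OF inj_tr])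

lemma tr_exps_tr_exps [simp]: "tr_exps i (tr_exps i m) = m"
  by (rule poly_mapping_eqI) (simp add: lookup_tr_exps)

lemma inj_tr_exps: "inj (tr_exps i)"
  by (metis injI tr_exps_tr_exps)

lemma bij_tr_exps: "bij (tr_exps i)"
  by (metis bij_betw_def inj_tr_exps tr_exps_tr_exps surj_def)

lemma tr_exps_add: "tr_exps i (a + b) = tr_exps i a + tr_exps i b"
  by (simp add: tr_exps_def map_key_plus[OF inj_tr])

lemma tr_exps_eq_0_iff: "tr_exps i m = 0 \<longleftrightarrow> m = 0"
  by (metis tr_exps_def map_key_zero[OF inj_tr] tr_exps_tr_exps)

lemma tr_exps_single: "tr_exps i (Poly_Mapping.single k 1) = Poly_Mapping.single (tr i k) 1"
  by (metis tr_exps_def map_key_single[OF inj_tr] tr_tr)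

lemma swap_vars_eq_map_key: "swap_vars i = Poly_Mapping.map_key (tr_exps i)"
  by (simp add: swap_vars_def tr_exps_def fun_eq_iff)

lemma lookup_swap_vars: "Poly_Mapping.lookup (swap_vars i p) m = Poly_Mapping.lookup p (tr_exps i m)"
  by (simp add: swap_vars_eq_map_key map_key.rep_eq[OF inj_tr_exps])

lemma swap_vars_add [simp]: "swap_vars i (p + q) = swap_vars i p + swap_vars i q"
  by (simp add: swap_vars_eq_map_key map_key_plus[OF inj_tr_exps])

lemma swap_vars_0 [simp]: "swap_vars i 0 = 0"
  by (simp add: swap_vars_eq_map_key map_key_zero[OF inj_tr_exps])

lemma swap_vars_uminus [simp]: "swap_vars i (- p) = - swap_vars i p"
  by (rule poly_mapping_eqI) (simp add: lookup_swap_vars lookup_uminus)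

lemma swap_vars_diff [simp]: "swap_vars i (p - q) = swap_vars i p - swap_vars i q"
  by (rule poly_mapping_eqI) (simp add: lookup_swap_vars lookup_minus)

lemma swap_vars_sum: "swap_vars i (\<Sum>x\<in>A. f x) = (\<Sum>x\<in>A. swap_vars i (f x))"
  by (induction A rule: infinite_finite_induct) auto

lemma swap_vars_mult [simp]: "swap_vars i (p * q) = swap_vars i p * swap_vars i q"
proof (rule poly_mapping_eqI)
  fix m
  let ?t = "tr_exps i" and ?p = "Poly_Mapping.lookup p" and ?q = "Poly_Mapping.lookup q"
  have "Poly_Mapping.lookup (swap_vars i (p * q)) m =
      Sum_any (\<lambda>l. ?p l * Sum_any (\<lambda>r. ?q r when ?t m = l + r))"
    by (simp only: lookup_swap_vars lookup_mult)
  also have "\<dots> = Sum_any (\<lambda>l. ?p (?t l) * Sum_any (\<lambda>r. ?q r when ?t m = ?t l + r))"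
    by (rule Sum_any.reindex_cong[OF bij_tr_exps[of i]]) (simp add: fun_eq_iff)
  also have "\<dots> = Sum_any (\<lambda>l. ?p (?t l) * Sum_any (\<lambda>r. ?q (?t r) when ?t m = ?t l + ?t r))"
    by (intro Sum_any.cong arg_cong[where f="(*) _"] Sum_any.reindex_cong[OF bij_tr_exps[of i]])
      (simp add: fun_eq_iff)
  also have "\<dots> = Sum_any (\<lambda>l. ?p (?t l) * Sum_any (\<lambda>r. ?q (?t r) when m = l + r))"
    by (simp only: tr_exps_add[symmetric] inj_eq[OF inj_tr_exps])
  also have "\<dots> = Poly_Mapping.lookup (swap_vars i p * swap_vars i q) m"
    by (simp only: lookup_swap_vars lookup_mult)
  finally show "Poly_Mapping.lookup (swap_vars i (p * q)) m =
      Poly_Mapping.lookup (swap_vars i p * swap_vars i q) m" .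
qed

lemma swap_vars_1 [simp]: "swap_vars i 1 = 1"
  by (rule poly_mapping_eqI) (simp add: lookup_swap_vars lookup_one tr_exps_eq_0_iff)

lemma swap_vars_power [simp]: "swap_vars i (p ^ k) = swap_vars i p ^ k"
  by (induction k) auto

lemma swap_vars_Var [simp]: "swap_vars i (Var k) = Var (tr i k)"
  by (simp add: Var_def swap_vars_eq_map_key flip: tr_exps_single[of i "tr i k", simplified])
    (simp add: map_key_single[OF inj_tr_exps])

lemma Pn_0 [simp]: "0 \<in> Pn n"
  by (simp add: Pn_def)

lemma Pn_1 [simp]: "1 \<in> Pn n"
  by (simp add: Pn_def)

lemma Pn_Var [simp]: "k \<in> {1..n} \<Longrightarrow> Var k \<in> Pn n"
  by (simp add: Pn_def Var_def)

lemma Pn_add [simp]: "p \<in> Pn n \<Longrightarrow> q \<in> Pn n \<Longrightarrow> p + q \<in> Pn n"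
  unfolding Pn_def using keys_add[of p q] by blast

lemma Pn_uminus [simp]: "p \<in> Pn n \<Longrightarrow> - p \<in> Pn n"
proof -
  have "Poly_Mapping.keys (- p) = Poly_Mapping.keys p"
    by (auto simp: in_keys_iff lookup_uminus)
  then show "p \<in> Pn n \<Longrightarrow> - p \<in> Pn n"
    by (simp add: Pn_def)
qed

lemma Pn_diff [simp]: "p \<in> Pn n \<Longrightarrow> q \<in> Pn n \<Longrightarrow> p - q \<in> Pn n"
  using Pn_add[of p n "- q"] by simp

lemma Pn_mult [simp]: "p \<in> Pn n \<Longrightarrow> q \<in> Pn n \<Longrightarrow> p * q \<in> Pn n"
proof -
  assume p: "p \<in> Pn n" and q: "q \<in> Pn n"
  have "Poly_Mapping.keys (a + b) \<subseteq> {1..n}"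
    if "a \<in> Poly_Mapping.keys p" "b \<in> Poly_Mapping.keys q" for a b
    using that p q keys_add[of a b] unfolding Pn_def by blast
  then show ?thesis
    using keys_mult[of p q] unfolding Pn_def by blast
qed

lemma Pn_sum [simp]: "(\<And>x. x \<in> A \<Longrightarrow> f x \<in> Pn n) \<Longrightarrow> (\<Sum>x\<in>A. f x) \<in> Pn n"
  by (induction A rule: infinite_finite_induct) auto

lemma Pn_power [simp]: "p \<in> Pn n \<Longrightarrow> p ^ k \<in> Pn n"
  by (induction k) auto

definition inversions :: "nat set \<Rightarrow> nat set \<Rightarrow> nat" where
  "inversions S T = card {(s, t). s \<in> S \<and> t \<in> T \<and> t < s}"

lemma ext_sign_eq_inversions: "ext_sign S T = (- 1) ^ inversions S T"
  by (simp add: ext_sign_def inversions_def)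

lemma inversions_Un_left:
  assumes "finite A" "finite B" "finite C" "A \<inter> B = {}"
  shows "inversions (A \<union> B) C = inversions A C + inversions B C"
proof -
  have "{(s, t). s \<in> A \<union> B \<and> t \<in> C \<and> t < s} =
      {(s, t). s \<in> A \<and> t \<in> C \<and> t < s} \<union> {(s, t). s \<in> B \<and> t \<in> C \<and> t < s}"
    by auto
  moreover have "finite {(s, t). s \<in> X \<and> t \<in> C \<and> t < s}" if "finite X" for X
    by (rule finite_subset[of _ "X \<times> C"]) (use assms that in auto)
  ultimately show ?thesis
    unfolding inversions_def using assms by (subst card_Un_disjoint[symmetric]) auto
qed

lemma inversions_Un_right:
  assumes "finite A" "finite B" "finite C" "B \<inter> C = {}"
  shows "inversions A (B \<union> C) = inversions A B + inversions A C"
proof -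
  have "{(s, t). s \<in> A \<and> t \<in> B \<union> C \<and> t < s} =
      {(s, t). s \<in> A \<and> t \<in> B \<and> t < s} \<union> {(s, t). s \<in> A \<and> t \<in> C \<and> t < s}"
    by auto
  moreover have "finite {(s, t). s \<in> A \<and> t \<in> X \<and> t < s}" if "finite X" for X
    by (rule finite_subset[of _ "A \<times> X"]) (use assms that in auto)
  ultimately show ?thesis
    unfolding inversions_def using assms by (subst card_Un_disjoint[symmetric]) auto
qed

lemma inversions_singleton_left: "inversions {a} T = card {t \<in> T. t < a}"
proof -
  have "{(s, t). s \<in> {a} \<and> t \<in> T \<and> t < s} = Pair a ` {t \<in> T. t < a}"
    by auto
  then show ?thesis
    unfolding inversions_def by (simp add: card_image inj_on_def)
qed

lemma ext_sign_empty_left [simp]: "ext_sign {} T = 1"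
  by (simp add: ext_sign_def)

lemma ext_sign_empty_right [simp]: "ext_sign S {} = 1"
  by (simp add: ext_sign_def)

lemma ext_sign_singletons: "ext_sign {s} {t} = (if t < s then - 1 else 1)"
  by (simp add: ext_sign_eq_inversions inversions_singleton_left Collect_conv_if)

lemma ext_sign_singleton_left_less: "\<forall>x\<in>T. a < x \<Longrightarrow> ext_sign {a} T = 1"
proof -
  assume "\<forall>x\<in>T. a < x"
  then have "{t \<in> T. t < a} = {}"
    by auto
  then show ?thesis
    by (simp only: ext_sign_eq_inversions inversions_singleton_left card.empty power_0)
qed

lemma ext_sign_insert_left:
  assumes "finite S" "finite T" "b \<notin> S"
  shows "ext_sign (insert b S) T = ext_sign S T * (- 1) ^ card {t \<in> T. t < b}"
  using assms inversions_Un_left[of "{b}" S T]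
  by (simp add: ext_sign_eq_inversions inversions_singleton_left power_add mult.commute)

lemma ext_sign_cocycle:
  assumes "finite A" "finite B" "finite C" "A \<inter> B = {}" "A \<inter> C = {}" "B \<inter> C = {}"
  shows "ext_sign (A \<union> B) C * ext_sign A B = ext_sign A (B \<union> C) * ext_sign B C"
  using assms
  by (simp add: ext_sign_eq_inversions inversions_Un_left inversions_Un_right
      power_add[symmetric] algebra_simps)

lemma sum_eq_single:
  assumes "finite A" "a \<in> A" "\<And>x. x \<in> A \<Longrightarrow> x \<noteq> a \<Longrightarrow> f x = 0"
  shows "sum f A = f a"
  using assms by (simp add: sum.remove sum.neutral)

text \<open>ext_mult f g U = 0 for infinite U (a sum over the infinite set Pow U), so ext_one is
  a unit only for elements vanishing on infinite sets.\<close>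

definition vanishes_on_infinite :: "ext \<Rightarrow> bool" where
  "vanishes_on_infinite f \<longleftrightarrow> (\<forall>U. infinite U \<longrightarrow> f U = 0)"

lemma ext_mult_infinite: "infinite U \<Longrightarrow> ext_mult f g U = 0"
  by (simp add: ext_mult_def)

lemma vanishes_on_infinite_ext_mult [simp]: "vanishes_on_infinite (ext_mult f g)"
  by (simp add: vanishes_on_infinite_def ext_mult_infinite)

lemma vanishes_on_infinite_ext_one [simp]: "vanishes_on_infinite ext_one"
  by (auto simp: vanishes_on_infinite_def ext_one_def)

lemma ext_mult_one_left:
  assumes "vanishes_on_infinite g"
  shows "ext_mult ext_one g = g"
proof
  fix U
  show "ext_mult ext_one g U = g U"
  proof (cases "finite U")
    case True
    then have "ext_mult ext_one g U = ext_sign {} U * ext_one {} * g U"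
      unfolding ext_mult_def
      by (subst sum.remove[of _ "{}"]) (auto simp: ext_one_def intro!: sum.neutral)
    then show ?thesis by (simp add: ext_one_def)
  qed (use assms in \<open>simp add: vanishes_on_infinite_def ext_mult_infinite\<close>)
qed

lemma ext_mult_one_right:
  assumes "vanishes_on_infinite f"
  shows "ext_mult f ext_one = f"
proof
  fix U
  show "ext_mult f ext_one U = f U"
  proof (cases "finite U")
    case True
    then have "ext_mult f ext_one U = ext_sign U {} * f U * ext_one {}"
      unfolding ext_mult_def
      by (subst sum.remove[of _ U]) (auto simp: ext_one_def split: if_splits intro!: sum.neutral)
    then show ?thesis by (simp add: ext_one_def)
  qed (use assms in \<open>simp add: vanishes_on_infinite_def ext_mult_infinite\<close>)
qed

lemma ext_mult_sum_left:
  "ext_mult (\<lambda>X. \<Sum>i\<in>I. c i * F i X) G U = (\<Sum>i\<in>I. c i * ext_mult (F i) G U)"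
  unfolding ext_mult_def
  by (simp add: sum_distrib_left sum_distrib_right sum.swap[of _ I] algebra_simps)

lemma ext_mult_sum_right:
  "ext_mult F (\<lambda>X. \<Sum>i\<in>I. c i * G i X) U = (\<Sum>i\<in>I. c i * ext_mult F (G i) U)"
  unfolding ext_mult_def
  by (simp add: sum_distrib_left sum_distrib_right sum.swap[of _ I] algebra_simps)

lemma ext_mult_scale_left: "ext_mult (ext_scale p f) g = ext_scale p (ext_mult f g)"
  by (rule ext) (simp add: ext_mult_def ext_scale_def sum_distrib_left algebra_simps)

lemma ext_mult_scale_right: "ext_mult f (ext_scale p g) = ext_scale p (ext_mult f g)"
  by (rule ext) (simp add: ext_mult_def ext_scale_def sum_distrib_left algebra_simps)

lemma ext_mult_add_left: "ext_mult (ext_add f g) h = ext_add (ext_mult f h) (ext_mult g h)"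
  by (rule ext) (simp add: ext_mult_def ext_add_def sum.distrib algebra_simps)

lemma ext_mult_add_right: "ext_mult f (ext_add g h) = ext_add (ext_mult f g) (ext_mult f h)"
  by (rule ext) (simp add: ext_mult_def ext_add_def sum.distrib algebra_simps)

lemma ext_mult_zero_left [simp]: "ext_mult (\<lambda>_. 0) g = (\<lambda>_. 0)"
  by (rule ext) (simp add: ext_mult_def)

lemma ext_mult_zero_right [simp]: "ext_mult f (\<lambda>_. 0) = (\<lambda>_. 0)"
  by (rule ext) (simp add: ext_mult_def)

lemma ext_scale_scale [simp]: "ext_scale p (ext_scale q f) = ext_scale (p * q) f"
  by (rule ext) (simp add: ext_scale_def)

lemma ext_add_zero_right [simp]: "ext_add f (\<lambda>_. 0) = f"
  by (simp add: ext_add_def)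

lemma ext_scale_zero [simp]: "ext_scale p (\<lambda>_. 0) = (\<lambda>_. 0)"
  by (rule ext) (simp add: ext_scale_def)

lemma ext_scale_one [simp]: "ext_scale 1 f = f"
  by (rule ext) (simp add: ext_scale_def)

lemma sum_Pow_split:
  assumes "finite U"
  shows "(\<Sum>S\<in>Pow U. \<Sum>A\<in>Pow S. h A S) = (\<Sum>A\<in>Pow U. \<Sum>B\<in>Pow (U - A). h A (A \<union> B))"
proof -
  have "(\<Sum>S\<in>Pow U. \<Sum>A\<in>Pow S. h A S) = (\<Sum>S\<in>Pow U. \<Sum>A\<in>{A \<in> Pow U. A \<subseteq> S}. h A S)"
    by (intro sum.cong refl) auto
  also have "\<dots> = (\<Sum>A\<in>Pow U. \<Sum>S\<in>{S \<in> Pow U. A \<subseteq> S}. h A S)"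
    using assms by (subst sum.swap_restrict) auto
  also have "\<dots> = (\<Sum>A\<in>Pow U. \<Sum>B\<in>Pow (U - A). h A (A \<union> B))"
  proof (rule sum.cong[OF refl])
    fix A assume "A \<in> Pow U"
    then have "bij_betw (\<lambda>B. A \<union> B) (Pow (U - A)) {S \<in> Pow U. A \<subseteq> S}"
      by (intro bij_betw_byWitness[where f'="\<lambda>S. S - A"]) auto
    then show "(\<Sum>S\<in>{S \<in> Pow U. A \<subseteq> S}. h A S) = (\<Sum>B\<in>Pow (U - A). h A (A \<union> B))"
      by (simp add: sum.reindex_bij_betw)
  qed
  finally show ?thesis .
qed

lemma ext_mult_assoc: "ext_mult (ext_mult f g) h = ext_mult f (ext_mult g h)"
proof
  fix U
  show "ext_mult (ext_mult f g) h U = ext_mult f (ext_mult g h) U"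
  proof (cases "finite U")
    case True
    have "ext_mult (ext_mult f g) h U = (\<Sum>S\<in>Pow U. \<Sum>A\<in>Pow S.
        ext_sign S (U - S) * ext_sign A (S - A) * f A * g (S - A) * h (U - S))"
      by (simp add: ext_mult_def sum_distrib_left sum_distrib_right algebra_simps)
    also have "\<dots> = (\<Sum>A\<in>Pow U. \<Sum>B\<in>Pow (U - A).
        ext_sign (A \<union> B) (U - A - B) * ext_sign A B * f A * g B * h (U - A - B))"
    proof (subst sum_Pow_split[OF True], intro sum.cong refl)
      fix A B assume "A \<in> Pow U" "B \<in> Pow (U - A)"
      then have "A \<union> B - A = B" "U - (A \<union> B) = U - A - B"
        by auto
      then show "ext_sign (A \<union> B) (U - (A \<union> B)) * ext_sign A (A \<union> B - A) * f A *
          g (A \<union> B - A) * h (U - (A \<union> B)) =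
          ext_sign (A \<union> B) (U - A - B) * ext_sign A B * f A * g B * h (U - A - B)"
        by simp
    qed
    also have "\<dots> = (\<Sum>A\<in>Pow U. \<Sum>B\<in>Pow (U - A).
        ext_sign A (U - A) * f A * (ext_sign B (U - A - B) * g B * h (U - A - B)))"
    proof (intro sum.cong refl)
      fix A B assume "A \<in> Pow U" "B \<in> Pow (U - A)"
      moreover from this have "B \<union> (U - A - B) = U - A"
        by auto
      ultimately show "ext_sign (A \<union> B) (U - A - B) * ext_sign A B * f A * g B * h (U - A - B) =
          ext_sign A (U - A) * f A * (ext_sign B (U - A - B) * g B * h (U - A - B))"
        using True ext_sign_cocycle[of A B "U - A - B"]
        by (auto intro: finite_subset simp: Diff_Un algebra_simps)
    qed
    also have "\<dots> = ext_mult f (ext_mult g h) U"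
      by (simp add: ext_mult_def sum_distrib_left)
    finally show ?thesis .
  qed (simp add: ext_mult_infinite)
qed

definition odd_elem :: "ext \<Rightarrow> bool" where
  "odd_elem v \<longleftrightarrow> (\<forall>S. v S \<noteq> 0 \<longrightarrow> (\<exists>j. S = {j}))"

lemma odd_elem_vanishes_on_infinite: "odd_elem v \<Longrightarrow> vanishes_on_infinite v"
  unfolding odd_elem_def vanishes_on_infinite_def by fastforce

lemma odd_elem_ext_gen: "odd_elem (ext_gen j)"
  by (simp add: odd_elem_def ext_gen_def)

lemma ext_mult_odd_left:
  assumes a: "odd_elem a" and U: "finite U"
  shows "ext_mult a g U = (\<Sum>j\<in>U. ext_sign {j} (U - {j}) * a {j} * g (U - {j}))"
proof -
  let ?F = "\<lambda>S. ext_sign S (U - S) * a S * g (U - S)"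
  have "ext_mult a g U = sum ?F (Pow U)"
    by (simp add: ext_mult_def)
  also have "\<dots> = sum ?F ((\<lambda>j. {j}) ` U)"
    using U a by (intro sum.mono_neutral_right) (auto simp: odd_elem_def)
  also have "\<dots> = (\<Sum>j\<in>U. ?F {j})"
    by (simp add: sum.reindex)
  finally show ?thesis .
qed

lemma ext_mult_odd_doubleton:
  assumes "odd_elem a" "odd_elem b" "s \<noteq> t"
  shows "ext_mult a b {s, t} = ext_sign {s} {t} * a {s} * b {t} + ext_sign {t} {s} * a {t} * b {s}"
proof -
  have "{s, t} - {s} = {t}" "{s, t} - {t} = {s}"
    using assms by auto
  then show ?thesis
    using assms by (simp add: ext_mult_odd_left)
qed

lemma ext_mult_odd_not_doubleton:
  assumes a: "odd_elem a" and b: "odd_elem b" and U: "finite U"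
    and not_doubleton: "\<nexists>s t. s \<noteq> t \<and> U = {s, t}"
  shows "ext_mult a b U = 0"
proof -
  have "b (U - {j}) = 0" if "j \<in> U" for j
  proof (rule ccontr)
    assume "b (U - {j}) \<noteq> 0"
    then obtain k where "U - {j} = {k}"
      using b by (auto simp: odd_elem_def)
    then have "j \<noteq> k" "U = {j, k}"
      using that by auto
    then show False
      using not_doubleton by blast
  qed
  then show ?thesis
    by (simp add: ext_mult_odd_left[OF a U])
qed

lemma ext_mult_odd_anticomm:
  assumes a: "odd_elem a" and b: "odd_elem b"
  shows "ext_mult a b = ext_scale (- 1) (ext_mult b a)"
proof
  fix U
  show "ext_mult a b U = ext_scale (- 1) (ext_mult b a) U"
  proof (cases "\<exists>s t. s \<noteq> t \<and> U = {s, t}")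
    case True
    then obtain s t where st: "s \<noteq> t" "U = {s, t}"
      by blast
    then have "ext_mult b a U = ext_mult b a {t, s}"
      by (simp add: insert_commute)
    moreover have "ext_sign {t} {s} = - ext_sign {s} {t}"
      using st by (auto simp: ext_sign_singletons)
    ultimately show ?thesis
      using st by (simp add: ext_mult_odd_doubleton[OF a b] ext_mult_odd_doubleton[OF b a]
          ext_scale_def algebra_simps)
  next
    case False
    then show ?thesis
      using ext_mult_odd_not_doubleton[OF a b] ext_mult_odd_not_doubleton[OF b a]
      by (cases "finite U") (simp_all add: ext_scale_def ext_mult_infinite)
  qed
qed

lemma ext_mult_odd_self: "odd_elem a \<Longrightarrow> ext_mult a a = (\<lambda>_. 0)"
  using ext_mult_odd_anticomm[of a a] by (auto simp: fun_eq_iff ext_scale_def equal_neg_zero)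

lemma ext_monom_empty [simp]: "ext_monom v {} = ext_one"
  by (simp add: ext_monom_def)

lemma ext_monom_insert_min:
  assumes "finite V" "\<forall>x\<in>V. a < x"
  shows "ext_monom v (insert a V) = ext_mult (v a) (ext_monom v V)"
proof -
  have "a \<notin> V"
    using assms by auto
  then have "sorted_list_of_set (insert a V) = a # sorted_list_of_set V"
    using assms by (simp add: sorted_list_of_set_insert insort_is_Cons less_imp_le)
  then show ?thesis
    by (simp add: ext_monom_def)
qed

lemma vanishes_on_infinite_ext_monom [simp]: "vanishes_on_infinite (ext_monom v S)"
  by (cases "map v (sorted_list_of_set S)") (simp_all add: ext_monom_def)

text \<open>Relative to an index set, because a triangular family is only constrained on {1..n}.\<close>

definition odd_family :: "nat set \<Rightarrow> (nat \<Rightarrow> ext) \<Rightarrow> bool" where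
  "odd_family A v \<longleftrightarrow> (\<forall>j\<in>A. odd_elem (v j))"

lemma ext_mult_odd_monom:
  assumes odd: "odd_family A v"
    and "finite V" "V \<subseteq> A" "a \<in> A"
  shows "ext_mult (v a) (ext_monom v V) =
    (if a \<in> V then (\<lambda>_. 0)
     else ext_scale ((- 1) ^ card {x \<in> V. x < a}) (ext_monom v (insert a V)))"
  using assms(2-4)
proof (induction V arbitrary: a rule: finite_linorder_min_induct)
  case empty
  then show ?case
    using odd by (simp add: odd_family_def ext_mult_one_right ext_monom_insert_min
        odd_elem_vanishes_on_infinite)
next
  case (insert b W)
  have b_min: "\<forall>x\<in>W. b < x" and "b \<notin> W"
    using insert.hyps(2) by auto
  have monom_bW: "ext_monom v (insert b W) = ext_mult (v b) (ext_monom v W)"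
    using insert.hyps by (simp add: ext_monom_insert_min)
  consider "a < b" | "a = b" | "b < a"
    by linarith
  then show ?case
  proof cases
    case 1
    then have a_min: "\<forall>x\<in>insert b W. a < x"
      using b_min by auto
    then have "{x \<in> insert b W. x < a} = {}" and a_notin: "a \<notin> insert b W"
      by auto
    then have "(- 1) ^ card {x \<in> insert b W. x < a} = (1 :: mpoly)"
      by (simp only: card.empty power_0)
    moreover have "ext_monom v (insert a (insert b W)) = ext_mult (v a) (ext_monom v (insert b W))"
      using insert.hyps(1) a_min by (intro ext_monom_insert_min) auto
    ultimately show ?thesis
      using a_notin by (simp only: if_False ext_scale_one)
  next
    case 2
    then show ?thesis
      using odd insert.prems
      by (simp add: odd_family_def monom_bW ext_mult_odd_self flip: ext_mult_assoc)
  next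
    case 3
    have "ext_mult (v a) (ext_monom v (insert b W)) =
        ext_scale (- 1) (ext_mult (v b) (ext_mult (v a) (ext_monom v W)))"
      using odd insert.prems
      by (simp add: odd_family_def monom_bW ext_mult_odd_anticomm[of "v a" "v b"]
          ext_mult_scale_left flip: ext_mult_assoc)
    also have "\<dots> = (if a \<in> insert b W then (\<lambda>_. 0)
        else ext_scale ((- 1) ^ card {x \<in> insert b W. x < a}) (ext_monom v (insert a (insert b W))))"
    proof (cases "a \<in> W")
      case False
      have "{x \<in> insert b W. x < a} = insert b {x \<in> W. x < a}"
        using 3 by auto
      then have "card {x \<in> insert b W. x < a} = Suc (card {x \<in> W. x < a})"
        using \<open>b \<notin> W\<close> insert.hyps(1) by simp
      moreover have "ext_monom v (insert b (insert a W)) = ext_mult (v b) (ext_monom v (insert a W))"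
        using insert.hyps 3 by (intro ext_monom_insert_min) auto
      ultimately show ?thesis
        using False 3 insert.IH[of a] insert.prems
        by (simp add: ext_mult_scale_right insert_commute)
    qed (use insert.IH[of a] insert.prems in simp)
    finally show ?thesis .
  qed
qed

lemma ext_monom_mult:
  assumes odd: "odd_family A v"
    and "finite S" "S \<subseteq> A" "T \<subseteq> A" "finite T"
  shows "ext_mult (ext_monom v S) (ext_monom v T) =
    (if S \<inter> T = {} then ext_scale (ext_sign S T) (ext_monom v (S \<union> T)) else (\<lambda>_. 0))"
  using assms(2,3)
proof (induction S rule: finite_linorder_min_induct)
  case empty
  then show ?case
    by (simp add: ext_mult_one_left)
next
  case (insert b W)
  have "b \<notin> W"
    using insert.hyps(2) by auto
  have "ext_mult (ext_monom v (insert b W)) (ext_monom v T) =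
      ext_mult (v b) (ext_mult (ext_monom v W) (ext_monom v T))"
    using insert.hyps by (simp add: ext_monom_insert_min ext_mult_assoc)
  also have "\<dots> = (if insert b W \<inter> T = {} then
      ext_scale (ext_sign (insert b W) T) (ext_monom v (insert b W \<union> T)) else (\<lambda>_. 0))"
  proof (cases "W \<inter> T = {}")
    case True
    have "{x \<in> W \<union> T. x < b} = {x \<in> T. x < b}"
      using insert.hyps(2) by auto
    moreover have "ext_sign (insert b W) T = ext_sign W T * (- 1) ^ card {t \<in> T. t < b}"
      using insert.hyps \<open>b \<notin> W\<close> assms(5) by (intro ext_sign_insert_left) auto
    ultimately show ?thesis
      using True insert \<open>b \<notin> W\<close> assms(4,5)
        ext_mult_odd_monom[OF odd, of "W \<union> T" b]
      by (auto simp: ext_mult_scale_right)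
  qed (use insert in auto)
  finally show ?case .
qed

lemma ext_eval_apply: "ext_eval n v c U = (\<Sum>S\<in>Pow {1..n}. c S * ext_monom v S U)"
  by (simp add: ext_eval_def ext_scale_def)

lemma ext_eval_add: "ext_eval n w (\<lambda>S. c S + d S) = (\<lambda>U. ext_eval n w c U + ext_eval n w d U)"
  by (simp add: ext_eval_apply[abs_def] sum.distrib distrib_right)

lemma ext_eval_diff: "ext_eval n w (\<lambda>S. c S - d S) = (\<lambda>U. ext_eval n w c U - ext_eval n w d U)"
  by (simp add: ext_eval_apply[abs_def] sum_subtractf left_diff_distrib)

lemma ext_eval_zero [simp]: "ext_eval n w (\<lambda>_. 0) = (\<lambda>_. 0)"
  by (simp add: ext_eval_apply[abs_def])

lemma ext_eval_mult:
  assumes odd: "odd_family {1..n} v"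
  shows "ext_eval n v (ext_mult f g) = ext_mult (ext_eval n v f) (ext_eval n v g)"
proof
  fix U
  let ?N = "{1..n}" and ?m = "ext_monom v"
  have "ext_mult (ext_eval n v f) (ext_eval n v g) U =
      (\<Sum>S\<in>Pow ?N. f S * (\<Sum>T\<in>Pow ?N. g T * ext_mult (?m S) (?m T) U))"
    by (simp add: ext_eval_def ext_scale_def ext_mult_sum_left ext_mult_sum_right)
  also have "\<dots> = (\<Sum>S\<in>Pow ?N. \<Sum>T\<in>Pow (?N - S). ext_sign S T * f S * g T * ?m (S \<union> T) U)"
  proof (rule sum.cong[OF refl])
    fix S assume "S \<in> Pow ?N"
    then have "g T * ext_mult (?m S) (?m T) U =
        (if S \<inter> T = {} then ext_sign S T * g T * ?m (S \<union> T) U else 0)" if "T \<in> Pow ?N" for T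
      using that ext_monom_mult[OF odd, of S T] by (auto simp: ext_scale_def finite_subset)
    then have "(\<Sum>T\<in>Pow ?N. g T * ext_mult (?m S) (?m T) U) =
        (\<Sum>T\<in>{T \<in> Pow ?N. S \<inter> T = {}}. ext_sign S T * g T * ?m (S \<union> T) U)"
      by (simp add: sum.inter_filter[symmetric] Pow_def)
    also have "{T \<in> Pow ?N. S \<inter> T = {}} = Pow (?N - S)"
      by auto
    finally show "f S * (\<Sum>T\<in>Pow ?N. g T * ext_mult (?m S) (?m T) U) =
        (\<Sum>T\<in>Pow (?N - S). ext_sign S T * f S * g T * ?m (S \<union> T) U)"
      by (simp add: sum_distrib_left algebra_simps)
  qed
  also have "\<dots> = (\<Sum>W\<in>Pow ?N. \<Sum>S\<in>Pow W. ext_sign S (W - S) * f S * g (W - S) * ?m W U)"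
  proof (subst sum_Pow_split, simp, intro sum.cong refl)
    fix S T assume "T \<in> Pow (?N - S)"
    then have "S \<union> T - S = T"
      by auto
    then show "ext_sign S T * f S * g T * ?m (S \<union> T) U =
        ext_sign S (S \<union> T - S) * f S * g (S \<union> T - S) * ?m (S \<union> T) U"
      by simp
  qed
  also have "\<dots> = ext_eval n v (ext_mult f g) U"
    by (simp add: ext_eval_apply ext_mult_def sum_distrib_right)
  finally show "ext_eval n v (ext_mult f g) U = ext_mult (ext_eval n v f) (ext_eval n v g) U"
    by (rule sym)
qed

definition supported_in :: "nat \<Rightarrow> ext \<Rightarrow> bool" where
  "supported_in n f \<longleftrightarrow> (\<forall>S. \<not> S \<subseteq> {1..n} \<longrightarrow> f S = 0)"

lemma ext_carrier_iff:
  "f \<in> ext_carrier n R \<longleftrightarrow> supported_in n f \<and> (\<forall>S. S \<subseteq> {1..n} \<longrightarrow> f S \<in> R)"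
  by (auto simp: ext_carrier_def supported_in_def)

lemma supported_in_ext_mult:
  assumes f: "supported_in n f" and g: "supported_in n g"
  shows "supported_in n (ext_mult f g)"
  unfolding supported_in_def
proof (intro allI impI)
  fix U assume U: "\<not> U \<subseteq> {1..n}"
  have zero: "f S * g (U - S) = 0" for S
  proof (cases "S \<subseteq> {1..n}")
    case True
    then have "\<not> U - S \<subseteq> {1..n}"
      using U by blast
    then show ?thesis
      using g by (simp add: supported_in_def)
  qed (use f in \<open>simp add: supported_in_def\<close>)
  then show "ext_mult f g U = 0"
    by (simp add: ext_mult_def mult.assoc zero)
qed

lemma supported_in_ext_one: "supported_in n ext_one"
  by (auto simp: supported_in_def ext_one_def)

lemma ext_mult_in_carrier:
  assumes "f \<in> ext_carrier n (Pn n)" "g \<in> ext_carrier n (Pn n)"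
  shows "ext_mult f g \<in> ext_carrier n (Pn n)"
proof -
  have "ext_mult f g U \<in> Pn n" if "U \<subseteq> {1..n}" for U
  proof -
    have "S \<subseteq> {1..n}" "U - S \<subseteq> {1..n}" if "S \<subseteq> U" for S
      using that \<open>U \<subseteq> {1..n}\<close> by auto
    then show ?thesis
      using assms by (auto simp: ext_carrier_iff ext_mult_def ext_sign_def intro!: Pn_sum Pn_mult)
  qed
  then show ?thesis
    using assms supported_in_ext_mult by (auto simp: ext_carrier_iff)
qed

lemma ext_one_in_carrier: "ext_one \<in> ext_carrier n (Pn n)"
  by (auto simp: ext_carrier_iff supported_in_def ext_one_def)

lemma ext_monom_in_carrier:
  assumes "finite S" "\<And>j. j \<in> S \<Longrightarrow> w j \<in> ext_carrier n (Pn n)"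
  shows "ext_monom w S \<in> ext_carrier n (Pn n)"
proof -
  have "foldr ext_mult (map w xs) ext_one \<in> ext_carrier n (Pn n)"
    if "\<forall>j\<in>set xs. w j \<in> ext_carrier n (Pn n)" for xs
    using that by (induction xs) (auto simp: ext_one_in_carrier ext_mult_in_carrier)
  then show ?thesis
    using assms by (simp add: ext_monom_def)
qed

lemma ext_eval_in_carrier:
  assumes c: "c \<in> ext_carrier n (Pn n)" and w: "\<And>j. j \<in> {1..n} \<Longrightarrow> w j \<in> ext_carrier n (Pn n)"
  shows "ext_eval n w c \<in> ext_carrier n (Pn n)"
proof -
  have "ext_monom w S \<in> ext_carrier n (Pn n)" if "S \<subseteq> {1..n}" for S
    using that w by (intro ext_monom_in_carrier) (auto intro: finite_subset)
  then have "supported_in n (ext_monom w S)" "\<And>U. U \<subseteq> {1..n} \<Longrightarrow> ext_monom w S U \<in> Pn n"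
    if "S \<subseteq> {1..n}" for S
    using that by (auto simp: ext_carrier_iff)
  moreover have "ext_eval n w c U \<in> Pn n" if "U \<subseteq> {1..n}" for U
    unfolding ext_eval_apply using c calculation(2) that
    by (intro Pn_sum Pn_mult) (auto simp: ext_carrier_iff)
  ultimately show ?thesis
    using c by (auto simp: ext_carrier_iff supported_in_def ext_eval_apply intro!: sum.neutral)
qed

section \<open>The simple transpositions act by ring automorphisms\<close>

definition swap_coeffs :: "nat \<Rightarrow> ext \<Rightarrow> ext" where
  "swap_coeffs i f = (\<lambda>U. swap_vars i (f U))"

text \<open>The substitution omega_i |-> omega_i + (x_i - x_(i+1)) omega_(i+1), i.e. ext_s i without
  the variable swap.\<close>

definition shift_gen :: "nat \<Rightarrow> ext \<Rightarrow> ext" where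
  "shift_gen i f = (\<lambda>U. f U + (if i + 1 \<in> U \<and> i \<notin> U
       then (Var i - Var (i + 1)) * f (insert i (U - {i + 1})) else 0))"

lemma ext_s_eq_shift_gen_swap_coeffs: "ext_s i f = shift_gen i (swap_coeffs i f)"
  by (simp add: ext_s_def shift_gen_def swap_coeffs_def)

lemma swap_coeffs_ext_mult: "swap_coeffs i (ext_mult f g) = ext_mult (swap_coeffs i f) (swap_coeffs i g)"
  by (rule ext) (simp add: swap_coeffs_def ext_mult_def swap_vars_sum ext_sign_def)

lemma supported_in_swap_coeffs: "supported_in n f \<Longrightarrow> supported_in n (swap_coeffs i f)"
  by (simp add: supported_in_def swap_coeffs_def)

definition ext_basis :: "nat set \<Rightarrow> ext" where
  "ext_basis S = (\<lambda>U. if U = S then 1 else 0)"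

lemma ext_gen_mult:
  "ext_mult (ext_gen a) g U =
    (if finite U \<and> a \<in> U then ext_sign {a} (U - {a}) * g (U - {a}) else 0)"
proof (cases "finite U")
  case True
  have "ext_mult (ext_gen a) g U =
      (\<Sum>j\<in>U. if j = a then ext_sign {a} (U - {a}) * g (U - {a}) else 0)"
    unfolding ext_mult_odd_left[OF odd_elem_ext_gen True] by (rule sum.cong) (auto simp: ext_gen_def)
  then show ?thesis
    using True by simp
qed (simp add: ext_mult_infinite)

lemma ext_gen_mult_basis:
  assumes "finite V" "\<forall>x\<in>V. a < x"
  shows "ext_mult (ext_gen a) (ext_basis V) = ext_basis (insert a V)"
proof
  fix U
  show "ext_mult (ext_gen a) (ext_basis V) U = ext_basis (insert a V) U"
    using assms ext_sign_singleton_left_less[of V a]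
    by (auto simp: ext_gen_mult ext_basis_def insert_Diff_if)
qed

lemma ext_gen_mult_basis_mem: "a \<in> V \<Longrightarrow> ext_mult (ext_gen a) (ext_basis V) = (\<lambda>_. 0)"
  by (rule ext) (auto simp: ext_gen_mult ext_basis_def)

lemma sum_coeff_ext_basis:
  assumes "supported_in n f"
  shows "(\<Sum>S\<in>Pow {1..n}. f S * ext_basis S U) = f U"
  using assms by (auto simp: ext_basis_def supported_in_def if_distrib[of "(*) _"] cong: if_cong)

lemma shift_gen_ext_basis:
  "shift_gen i (ext_basis S) =
    (if i \<in> S \<and> i + 1 \<notin> S
     then ext_add (ext_basis S) (ext_scale (Var i - Var (i + 1)) (ext_basis (insert (i + 1) (S - {i}))))
     else ext_basis S)"
proof
  fix U
  let ?c = "Var i - Var (i + 1)"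
  have "(i + 1 \<in> U \<and> i \<notin> U \<and> insert i (U - {i + 1}) = S) \<longleftrightarrow>
      (i \<in> S \<and> i + 1 \<notin> S \<and> U = insert (i + 1) (S - {i}))"
    by auto
  then have "shift_gen i (ext_basis S) U = (if U = S then 1 else 0) +
      (if i \<in> S \<and> i + 1 \<notin> S \<and> U = insert (i + 1) (S - {i}) then ?c else 0)"
    unfolding shift_gen_def ext_basis_def
    by (cases "i + 1 \<in> U \<and> i \<notin> U \<and> insert i (U - {i + 1}) = S") auto
  then show "shift_gen i (ext_basis S) U = (if i \<in> S \<and> i + 1 \<notin> S
      then ext_add (ext_basis S) (ext_scale ?c (ext_basis (insert (i + 1) (S - {i}))))
      else ext_basis S) U"
    by (simp add: ext_basis_def ext_add_def ext_scale_def)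
qed

definition shifted_gens :: "nat \<Rightarrow> nat \<Rightarrow> ext" where
  "shifted_gens i j = (if j = i then ext_add (ext_gen i) (ext_scale (Var i - Var (i + 1)) (ext_gen (i + 1)))
     else ext_gen j)"

lemma odd_family_shifted_gens: "odd_family A (shifted_gens i)"
  by (auto simp: odd_family_def odd_elem_def shifted_gens_def ext_gen_def ext_add_def ext_scale_def)

lemma ext_mult_shifted_gen_same:
  assumes "finite V" "\<forall>x\<in>V. i < x"
  shows "ext_mult (shifted_gens i i) (shift_gen i (ext_basis V)) = shift_gen i (ext_basis (insert i V))"
proof -
  have "i \<notin> V"
    using assms(2) by auto
  have i_basis: "ext_mult (ext_gen i) (ext_basis V) = ext_basis (insert i V)"
    using assms by (rule ext_gen_mult_basis)
  show ?thesis
  proof (cases "i + 1 \<in> V")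
    case True
    then show ?thesis
      using \<open>i \<notin> V\<close> i_basis
      by (simp add: shift_gen_ext_basis shifted_gens_def ext_mult_add_left ext_mult_scale_left
          ext_gen_mult_basis_mem)
  next
    case False
    then have "\<forall>x\<in>V. i + 1 < x"
      using assms(2) by (metis Suc_eq_plus1 Suc_lessI)
    then have "ext_mult (ext_gen (i + 1)) (ext_basis V) = ext_basis (insert (i + 1) V)"
      using assms(1) by (intro ext_gen_mult_basis) auto
    moreover have "insert (i + 1) (insert i V - {i}) = insert (i + 1) V"
      using \<open>i \<notin> V\<close> by auto
    ultimately show ?thesis
      using \<open>i \<notin> V\<close> False i_basis
      by (simp add: shift_gen_ext_basis shifted_gens_def ext_mult_add_left ext_mult_scale_left)
  qed
qed

lemma ext_mult_shifted_gen_other: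
  assumes "finite V" "\<forall>x\<in>V. a < x" "a \<noteq> i"
  shows "ext_mult (shifted_gens i a) (shift_gen i (ext_basis V)) = shift_gen i (ext_basis (insert a V))"
proof -
  have a_basis: "ext_mult (ext_gen a) (ext_basis V) = ext_basis (insert a V)"
    using assms(1,2) by (rule ext_gen_mult_basis)
  show ?thesis
  proof (cases "i \<in> V \<and> i + 1 \<notin> V")
    case True
    then have "a < i"
      using assms(2) by auto
    then have "ext_mult (ext_gen a) (ext_basis (insert (i + 1) (V - {i}))) =
        ext_basis (insert a (insert (i + 1) (V - {i})))"
      using assms(1,2) by (intro ext_gen_mult_basis) auto
    moreover have "insert (i + 1) (insert a V - {i}) = insert a (insert (i + 1) (V - {i}))"
      using \<open>a < i\<close> by auto
    ultimately show ?thesis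
      using assms(3) True \<open>a < i\<close> a_basis
      by (simp add: shift_gen_ext_basis shifted_gens_def ext_mult_add_right ext_mult_scale_right)
  next
    case False
    moreover from this have "\<not> (i \<in> insert a V \<and> i + 1 \<notin> insert a V)"
      using assms(3) by auto
    ultimately show ?thesis
      using assms(3) a_basis by (simp only: shift_gen_ext_basis if_False shifted_gens_def)
  qed
qed

lemma ext_monom_shifted_gens:
  assumes "finite S"
  shows "ext_monom (shifted_gens i) S = shift_gen i (ext_basis S)"
  using assms
proof (induction S rule: finite_linorder_min_induct)
  case empty
  show ?case
    using shift_gen_ext_basis[of i "{}"] by (simp add: ext_basis_def ext_one_def)
next
  case (insert a V)
  then show ?case
    by (cases "a = i")
      (simp_all add: ext_monom_insert_min ext_mult_shifted_gen_same ext_mult_shifted_gen_other)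
qed

lemma ext_eval_shifted_gens:
  assumes f: "supported_in n f"
  shows "ext_eval n (shifted_gens i) f = shift_gen i f"
proof
  fix U
  let ?c = "Var i - Var (i + 1)" and ?U' = "insert i (U - {i + 1})"
  have "ext_eval n (shifted_gens i) f U = (\<Sum>S\<in>Pow {1..n}. f S * shift_gen i (ext_basis S) U)"
    by (auto simp: ext_eval_apply ext_monom_shifted_gens finite_subset intro!: sum.cong)
  also have "\<dots> = (\<Sum>S\<in>Pow {1..n}. f S * ext_basis S U) +
      (if i + 1 \<in> U \<and> i \<notin> U then ?c * (\<Sum>S\<in>Pow {1..n}. f S * ext_basis S ?U') else 0)"
  proof (cases "i + 1 \<in> U \<and> i \<notin> U")
    case True
    then show ?thesis
      by (simp add: shift_gen_def distrib_left sum.distrib sum_distrib_left mult.left_commute)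
  next
    case False
    then show ?thesis
      unfolding shift_gen_def if_not_P[OF False] by simp
  qed
  also have "\<dots> = shift_gen i f U"
    unfolding sum_coeff_ext_basis[OF f] by (simp add: shift_gen_def)
  finally show "ext_eval n (shifted_gens i) f U = shift_gen i f U" .
qed

lemma ext_s_mult:
  assumes f: "supported_in n f" and g: "supported_in n g"
  shows "ext_s i (ext_mult f g) = ext_mult (ext_s i f) (ext_s i g)"
proof -
  have sf: "supported_in n (swap_coeffs i f)" and sg: "supported_in n (swap_coeffs i g)"
    using f g by (simp_all add: supported_in_swap_coeffs)
  have "ext_s i (ext_mult f g) = shift_gen i (ext_mult (swap_coeffs i f) (swap_coeffs i g))"
    by (simp add: ext_s_eq_shift_gen_swap_coeffs swap_coeffs_ext_mult)
  also have "\<dots> = ext_eval n (shifted_gens i) (ext_mult (swap_coeffs i f) (swap_coeffs i g))"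
    using sf sg by (simp add: ext_eval_shifted_gens supported_in_ext_mult)
  also have "\<dots> = ext_mult (ext_eval n (shifted_gens i) (swap_coeffs i f))
      (ext_eval n (shifted_gens i) (swap_coeffs i g))"
    by (rule ext_eval_mult[OF odd_family_shifted_gens])
  also have "\<dots> = ext_mult (ext_s i f) (ext_s i g)"
    using sf sg by (simp add: ext_eval_shifted_gens ext_s_eq_shift_gen_swap_coeffs)
  finally show ?thesis .
qed

lemma ext_s_one: "ext_s i ext_one = ext_one"
  by (rule ext) (auto simp: ext_s_def ext_one_def)

lemma ext_s_ext_monom:
  assumes "finite S" "\<And>j. j \<in> S \<Longrightarrow> supported_in n (w j) \<and> ext_s i (w j) = w j"
  shows "ext_s i (ext_monom w S) = ext_monom w S"
proof -
  have "supported_in n (foldr ext_mult (map w xs) ext_one) \<and>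
      ext_s i (foldr ext_mult (map w xs) ext_one) = foldr ext_mult (map w xs) ext_one"
    if "\<forall>j\<in>set xs. supported_in n (w j) \<and> ext_s i (w j) = w j" for xs
    using that
    by (induction xs) (auto simp: ext_s_one ext_s_mult supported_in_ext_mult supported_in_ext_one)
  then show ?thesis
    using assms by (simp add: ext_monom_def)
qed

lemma ext_s_lincomb:
  "ext_s i (\<lambda>U. \<Sum>S\<in>A. ext_scale (c S) (F S) U) =
    (\<lambda>U. \<Sum>S\<in>A. ext_scale (swap_vars i (c S)) (ext_s i (F S)) U)"
proof
  fix U
  show "ext_s i (\<lambda>U. \<Sum>S\<in>A. ext_scale (c S) (F S) U) U =
      (\<Sum>S\<in>A. ext_scale (swap_vars i (c S)) (ext_s i (F S)) U)"
  proof (cases "i + 1 \<in> U \<and> i \<notin> U")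
    case True
    then show ?thesis
      by (simp add: ext_s_def ext_scale_def swap_vars_sum distrib_left sum.distrib
          sum_distrib_left mult.left_commute)
  next
    case False
    then show ?thesis
      unfolding ext_s_def ext_scale_def if_not_P[OF False] by (simp add: swap_vars_sum)
  qed
qed

section \<open>Triangular families give a basis\<close>

definition weight :: "nat set \<Rightarrow> nat" where
  "weight S = (\<Sum>x\<in>S. x)"

lemma weight_remove: "finite U \<Longrightarrow> j \<in> U \<Longrightarrow> weight U = j + weight (U - {j})"
  by (simp add: weight_def sum.remove)

lemma weight_insert: "finite V \<Longrightarrow> a \<notin> V \<Longrightarrow> weight (insert a V) = a + weight V"
  by (simp add: weight_def)

lemma triangular_familyE:
  assumes "triangular_family n w" "a \<in> {1..n}"
  obtains c where "\<And>j. c j \<in> Pn n"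
    "\<And>S. w a S = (if S = {a} then 1 else 0) + (\<Sum>j\<in>{a<..n}. c j * (if S = {j} then 1 else 0))"
proof -
  from assms obtain c where "\<forall>j. c j \<in> Pn n"
    "w a = ext_add (ext_gen a) (\<lambda>S. \<Sum>j\<in>{a<..n}. ext_scale (c j) (ext_gen j) S)"
    unfolding triangular_family_def by blast
  then show thesis
    by (intro that[of c]) (simp_all add: ext_add_def ext_scale_def ext_gen_def)
qed

lemma triangular_family_diag:
  assumes "triangular_family n w" "a \<in> {1..n}"
  shows "w a {a} = 1"
proof -
  obtain c where "\<And>S. w a S = (if S = {a} then 1 else 0) +
      (\<Sum>j\<in>{a<..n}. c j * (if S = {j} then 1 else 0))"
    using triangular_familyE[OF assms] by blast
  moreover have "(\<Sum>j\<in>{a<..n}. c j * (if {a} = {j} then 1 else 0)) = 0"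
    by (rule sum.neutral) auto
  ultimately show ?thesis
    by simp
qed

lemma triangular_family_nonzero:
  assumes "triangular_family n w" "a \<in> {1..n}" "w a S \<noteq> 0"
  shows "\<exists>j. S = {j} \<and> a \<le> j \<and> j \<le> n"
proof (rule ccontr)
  assume not_single: "\<nexists>j. S = {j} \<and> a \<le> j \<and> j \<le> n"
  obtain c where "\<And>S. w a S = (if S = {a} then 1 else 0) +
      (\<Sum>j\<in>{a<..n}. c j * (if S = {j} then 1 else 0))"
    using triangular_familyE[OF assms(1,2)] by blast
  moreover have "(\<Sum>j\<in>{a<..n}. c j * (if S = {j} then 1 else 0)) = 0"
    using not_single by (intro sum.neutral) auto
  ultimately show False
    using assms(2,3) not_single by (cases "S = {a}") auto
qed

lemma triangular_family_in_carrier: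
  assumes "triangular_family n w" "a \<in> {1..n}"
  shows "w a \<in> ext_carrier n (Pn n)"
proof -
  obtain c where c: "\<And>j. c j \<in> Pn n" and "\<And>S. w a S = (if S = {a} then 1 else 0) +
      (\<Sum>j\<in>{a<..n}. c j * (if S = {j} then 1 else 0))"
    using triangular_familyE[OF assms] by blast
  then have "w a S \<in> Pn n" for S
    by simp
  moreover have "w a S = 0" if "\<not> S \<subseteq> {1..n}" for S
    using triangular_family_nonzero[OF assms] assms(2) that by fastforce
  ultimately show ?thesis
    by (simp add: ext_carrier_def)
qed

lemma triangular_family_odd:
  assumes "triangular_family n w"
  shows "odd_family {1..n} w"
  unfolding odd_family_def odd_elem_def using triangular_family_nonzero[OF assms] by blast

lemma triangular_monom_support:
  assumes tri: "triangular_family n w" and "S \<subseteq> {1..n}" "ext_monom w S U \<noteq> 0"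
  shows "U = S \<or> weight S < weight U"
proof -
  have "finite S"
    using assms(2) by (rule finite_subset) simp
  then show ?thesis
    using assms(2,3)
  proof (induction S arbitrary: U rule: finite_linorder_min_induct)
    case empty
    then show ?case
      by (simp add: ext_one_def split: if_splits)
  next
    case (insert a V)
    have a: "a \<in> {1..n}" and "a \<notin> V"
      using insert.prems(1) insert.hyps(2) by auto
    have "finite U"
      using insert.prems(2) ext_mult_infinite insert.hyps by (auto simp: ext_monom_insert_min)
    moreover have "odd_elem (w a)"
      using triangular_family_odd[OF tri] a by (simp add: odd_family_def)
    ultimately have "ext_monom w (insert a V) U =
        (\<Sum>j\<in>U. ext_sign {j} (U - {j}) * w a {j} * ext_monom w V (U - {j}))"
      using insert.hyps by (simp add: ext_monom_insert_min ext_mult_odd_left)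
    then have "(\<Sum>j\<in>U. ext_sign {j} (U - {j}) * w a {j} * ext_monom w V (U - {j})) \<noteq> 0"
      using insert.prems(2) by simp
    then obtain j where "j \<in> U" and "ext_sign {j} (U - {j}) * w a {j} * ext_monom w V (U - {j}) \<noteq> 0"
      by (rule sum.not_neutral_contains_not_neutral)
    then have "w a {j} \<noteq> 0" and monom_V: "ext_monom w V (U - {j}) \<noteq> 0"
      by auto
    then have "a \<le> j"
      using triangular_family_nonzero[OF tri a] by auto
    have "U - {j} = V \<or> weight V < weight (U - {j})"
      using insert.IH insert.prems(1) monom_V by blast
    moreover have "weight U = j + weight (U - {j})" "weight (insert a V) = a + weight V"
      using \<open>finite U\<close> \<open>j \<in> U\<close> insert.hyps(1) \<open>a \<notin> V\<close>
      by (simp_all add: weight_remove weight_insert)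
    ultimately show ?case
      using \<open>a \<le> j\<close> \<open>j \<in> U\<close> by (cases "j = a") (auto simp: insert_absorb)
  qed
qed

lemma triangular_monom_vanishes:
  assumes tri: "triangular_family n w" and "S \<subseteq> {1..n}" "U \<noteq> S" "weight U \<le> weight S"
  shows "ext_monom w S U = 0"
  using triangular_monom_support[OF tri assms(2), of U] assms(3,4) by fastforce

lemma triangular_monom_diag:
  assumes tri: "triangular_family n w" and "S \<subseteq> {1..n}"
  shows "ext_monom w S S = 1"
proof -
  have "finite S"
    using assms(2) by (rule finite_subset) simp
  then show ?thesis
    using assms(2)
  proof (induction S rule: finite_linorder_min_induct)
    case empty
    then show ?case
      by (simp add: ext_one_def)
  next
    case (insert a V)
    let ?U = "insert a V"
    have a: "a \<in> {1..n}" and V: "V \<subseteq> {1..n}" and "a \<notin> V"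
      using insert.prems insert.hyps(2) by auto
    have "odd_elem (w a)"
      using triangular_family_odd[OF tri] a by (simp add: odd_family_def)
    then have "ext_monom w ?U ?U = (\<Sum>j\<in>?U. ext_sign {j} (?U - {j}) * w a {j} * ext_monom w V (?U - {j}))"
      using insert.hyps by (simp add: ext_monom_insert_min ext_mult_odd_left)
    also have "\<dots> = ext_sign {a} (?U - {a}) * w a {a} * ext_monom w V (?U - {a})"
    proof (rule sum_eq_single)
      fix j assume "j \<in> ?U" "j \<noteq> a"
      then have "j \<in> V" "a < j"
        using insert.hyps(2) by auto
      have "weight ?U = j + weight (?U - {j})"
        using insert.hyps(1) \<open>j \<in> ?U\<close> by (intro weight_remove) auto
      moreover have "weight ?U = a + weight V"
        using insert.hyps(1) \<open>a \<notin> V\<close> by (rule weight_insert)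
      ultimately have "weight (?U - {j}) \<le> weight V"
        using \<open>a < j\<close> by linarith
      moreover have "?U - {j} \<noteq> V"
        using \<open>a \<notin> V\<close> \<open>j \<noteq> a\<close> by auto
      ultimately have "ext_monom w V (?U - {j}) = 0"
        by (intro triangular_monom_vanishes[OF tri V])
      then show "ext_sign {j} (?U - {j}) * w a {j} * ext_monom w V (?U - {j}) = 0"
        by simp
    qed (use insert.hyps(1) in auto)
    also have "\<dots> = 1"
      using insert.IH[OF V] insert.hyps(2) \<open>a \<notin> V\<close> triangular_family_diag[OF tri a]
      by (simp add: ext_sign_singleton_left_less)
    finally show ?case .
  qed
qed

lemma triangular_eval_low_weight:
  assumes tri: "triangular_family n w" and c: "supported_in n c"
    and heavy: "\<And>T. c T \<noteq> 0 \<Longrightarrow> k \<le> weight T" and "weight U \<le> k"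
  shows "ext_eval n w c U = c U"
proof -
  have off_diag: "c T * ext_monom w T U = 0" if "T \<subseteq> {1..n}" "T \<noteq> U" for T
  proof (cases "c T = 0")
    case False
    then have "weight U \<le> weight T"
      using heavy \<open>weight U \<le> k\<close> by fastforce
    then show ?thesis
      using triangular_monom_vanishes[OF tri that(1)] that(2) by simp
  qed simp
  then show ?thesis
  proof (cases "U \<subseteq> {1..n}")
    case True
    then show ?thesis
      unfolding ext_eval_apply
      by (subst sum_eq_single[where a=U]) (use off_diag in \<open>auto simp: triangular_monom_diag[OF tri]\<close>)
  next
    case False
    then have "ext_eval n w c U = 0"
      unfolding ext_eval_apply using off_diag by (intro sum.neutral) blast
    then show ?thesis
      using c False by (simp add: supported_in_def)
  qed
qed

lemma triangular_eval_eq_zero: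
  assumes tri: "triangular_family n w" and c: "supported_in n c"
    and zero: "ext_eval n w c = (\<lambda>_. 0)"
  shows "c = (\<lambda>_. 0)"
proof (rule ccontr)
  assume "c \<noteq> (\<lambda>_. 0)"
  then obtain S where "c S \<noteq> 0"
    by auto
  then obtain T where "c T \<noteq> 0" and least: "\<And>T'. c T' \<noteq> 0 \<Longrightarrow> weight T \<le> weight T'"
    using ex_has_least_nat[of "\<lambda>T. c T \<noteq> 0" S weight] by blast
  then have "ext_eval n w c T = c T"
    by (intro triangular_eval_low_weight[OF tri c, where k="weight T"]) auto
  then show False
    using zero \<open>c T \<noteq> 0\<close> by simp
qed

lemma triangular_eval_inj_on:
  assumes tri: "triangular_family n w"
  shows "inj_on (ext_eval n w) {c. supported_in n c}"
proof (rule inj_onI)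
  fix c d assume "c \<in> {c. supported_in n c}" "d \<in> {c. supported_in n c}"
    and eq: "ext_eval n w c = ext_eval n w d"
  then have "supported_in n (\<lambda>S. c S - d S)"
    by (simp add: supported_in_def)
  moreover have "ext_eval n w (\<lambda>S. c S - d S) = (\<lambda>_. 0)"
    by (simp add: ext_eval_diff eq)
  ultimately have "(\<lambda>S. c S - d S) = (\<lambda>_. 0)"
    by (rule triangular_eval_eq_zero[OF tri])
  then show "c = d"
    by (simp add: fun_eq_iff)
qed

lemma triangular_eval_peel:
  assumes tri: "triangular_family n w"
    and f: "f \<in> ext_carrier n (Pn n)" and heavy: "\<And>U. f U \<noteq> 0 \<Longrightarrow> k \<le> weight U"
  obtains c0 where "c0 \<in> ext_carrier n (Pn n)" "(\<lambda>U. f U - ext_eval n w c0 U) \<in> ext_carrier n (Pn n)"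
    "\<And>U. f U - ext_eval n w c0 U \<noteq> 0 \<Longrightarrow> Suc k \<le> weight U"
proof
  define c0 where "c0 S = (if weight S = k then f S else 0)" for S
  show c0: "c0 \<in> ext_carrier n (Pn n)"
    using f by (simp add: ext_carrier_def c0_def)
  have "ext_eval n w c0 \<in> ext_carrier n (Pn n)"
    using c0 triangular_family_in_carrier[OF tri] by (rule ext_eval_in_carrier)
  then show "(\<lambda>U. f U - ext_eval n w c0 U) \<in> ext_carrier n (Pn n)"
    using f by (simp add: ext_carrier_def)
  fix U assume nonzero: "f U - ext_eval n w c0 U \<noteq> 0"
  show "Suc k \<le> weight U"
  proof (rule ccontr)
    assume "\<not> Suc k \<le> weight U"
    then have "ext_eval n w c0 U = c0 U"
      using c0 by (intro triangular_eval_low_weight[OF tri, where k=k])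
        (auto simp: ext_carrier_iff c0_def split: if_splits)
    then show False
      using nonzero heavy[of U] \<open>\<not> Suc k \<le> weight U\<close> by (auto simp: c0_def split: if_splits)
  qed
qed

lemma triangular_eval_surj_heavy:
  assumes tri: "triangular_family n w"
    and "f \<in> ext_carrier n (Pn n)" "\<And>U. f U \<noteq> 0 \<Longrightarrow> k \<le> weight U"
  shows "\<exists>c \<in> ext_carrier n (Pn n). ext_eval n w c = f"
  using assms(2,3)
proof (induction "Suc (weight {1..n}) - k" arbitrary: k f)
  case 0
  have "f U = 0" for U
  proof (rule ccontr)
    assume "f U \<noteq> 0"
    then have "U \<subseteq> {1..n}" "k \<le> weight U"
      using "0.prems" by (auto simp: ext_carrier_def)
    then show False
      using "0.hyps" sum_mono2[of "{1..n}" U "\<lambda>x. x"] by (simp add: weight_def)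
  qed
  then show ?case
    by (intro bexI[of _ "\<lambda>_. 0"]) (auto simp: ext_carrier_def)
next
  case (Suc m)
  obtain c0 where c0: "c0 \<in> ext_carrier n (Pn n)"
    and rest: "(\<lambda>U. f U - ext_eval n w c0 U) \<in> ext_carrier n (Pn n)"
    "\<And>U. f U - ext_eval n w c0 U \<noteq> 0 \<Longrightarrow> Suc k \<le> weight U"
    using triangular_eval_peel[OF tri Suc.prems] by blast
  then obtain c1 where c1: "c1 \<in> ext_carrier n (Pn n)"
    and "ext_eval n w c1 = (\<lambda>U. f U - ext_eval n w c0 U)"
    using Suc.hyps(1)[of "Suc k"] Suc.hyps(2) by fastforce
  then have "ext_eval n w (\<lambda>S. c0 S + c1 S) = f"
    by (simp add: ext_eval_add)
  moreover have "(\<lambda>S. c0 S + c1 S) \<in> ext_carrier n (Pn n)"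
    using c0 c1 by (simp add: ext_carrier_def)
  ultimately show ?case
    by blast
qed

lemma triangular_eval_surj:
  assumes "triangular_family n w" "f \<in> ext_carrier n (Pn n)"
  shows "\<exists>c \<in> ext_carrier n (Pn n). ext_eval n w c = f"
  using triangular_eval_surj_heavy[OF assms, of 0] by simp

lemma ext_monom_in_LamOmega:
  assumes inv: "\<forall>j\<in>{1..n}. w j \<in> LamOmega n" and S: "S \<subseteq> {1..n}"
  shows "ext_monom w S \<in> LamOmega n"
proof -
  have "finite S"
    using S by (rule finite_subset) simp
  moreover have "w j \<in> ext_carrier n (Pn n)" if "j \<in> S" for j
    using that S inv by (auto simp: LamOmega_def)
  moreover have "supported_in n (w j) \<and> ext_s i (w j) = w j" if "j \<in> S" "1 \<le> i" "i < n" for i j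
    using that S inv by (auto simp: LamOmega_def ext_carrier_iff)
  ultimately show ?thesis
    unfolding LamOmega_def by (auto intro: ext_monom_in_carrier ext_s_ext_monom)
qed

lemma ext_s_ext_eval:
  assumes inv: "\<forall>j\<in>{1..n}. w j \<in> LamOmega n" and i: "1 \<le> i" "i < n"
  shows "ext_s i (ext_eval n w c) = ext_eval n w (\<lambda>S. swap_vars i (c S))"
proof -
  have "ext_s i (ext_monom w S) = ext_monom w S" if "S \<subseteq> {1..n}" for S
    using ext_monom_in_LamOmega[OF inv that] i by (simp add: LamOmega_def)
  then show ?thesis
    unfolding ext_eval_def ext_s_lincomb by (intro ext sum.cong) auto
qed

lemma ext_eval_in_LamOmega:
  assumes inv: "\<forall>j\<in>{1..n}. w j \<in> LamOmega n" and c: "c \<in> ext_carrier n (Lam n)"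
  shows "ext_eval n w c \<in> LamOmega n"
  unfolding LamOmega_def
proof (intro CollectI conjI allI impI)
  have "c \<in> ext_carrier n (Pn n)"
    using c by (auto simp: ext_carrier_def Lam_def)
  then show "ext_eval n w c \<in> ext_carrier n (Pn n)"
    using inv by (intro ext_eval_in_carrier) (auto simp: LamOmega_def)
  fix i assume i: "1 \<le> i \<and> i < n"
  moreover have "swap_vars i (c S) = c S" if "1 \<le> i \<and> i < n" for S
    using c that by (cases "S \<subseteq> {1..n}") (auto simp: ext_carrier_def Lam_def)
  ultimately have "(\<lambda>S. swap_vars i (c S)) = c"
    by auto
  then show "ext_s i (ext_eval n w c) = ext_eval n w c"
    using inv i ext_s_ext_eval[of n w i c] by simp
qed

lemma LamOmega_in_image_ext_eval:
  assumes tri: "triangular_family n w" and inv: "\<forall>j\<in>{1..n}. w j \<in> LamOmega n"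
    and f: "f \<in> LamOmega n"
  shows "\<exists>c \<in> ext_carrier n (Lam n). ext_eval n w c = f"
proof -
  obtain c where c: "c \<in> ext_carrier n (Pn n)" and eval_c: "ext_eval n w c = f"
    using f triangular_eval_surj[OF tri] by (auto simp: LamOmega_def)
  have "swap_vars i (c S) = c S" if i: "1 \<le> i" "i < n" for i S
  proof -
    have "ext_s i f = f"
      using f i by (simp add: LamOmega_def)
    then have "ext_eval n w (\<lambda>S. swap_vars i (c S)) = ext_eval n w c"
      using eval_c ext_s_ext_eval[OF inv i, of c] by simp
    moreover have "supported_in n (\<lambda>S. swap_vars i (c S))" "supported_in n c"
      using c by (simp_all add: ext_carrier_iff supported_in_def)
    ultimately have "(\<lambda>S. swap_vars i (c S)) = c"
      using triangular_eval_inj_on[OF tri] by (auto dest: inj_onD)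
    then show ?thesis
      by (simp add: fun_eq_iff)
  qed
  then have "c \<in> ext_carrier n (Lam n)"
    using c by (simp add: ext_carrier_def Lam_def)
  then show ?thesis
    using eval_c by blast
qed

lemma triangular_eval_bij_betw:
  assumes tri: "triangular_family n w" and inv: "\<forall>j\<in>{1..n}. w j \<in> LamOmega n"
  shows "bij_betw (ext_eval n w) (ext_carrier n (Lam n)) (LamOmega n)"
  unfolding bij_betw_def
proof
  have "ext_carrier n (Lam n) \<subseteq> {c. supported_in n c}"
    by (auto simp: ext_carrier_iff)
  then show "inj_on (ext_eval n w) (ext_carrier n (Lam n))"
    using triangular_eval_inj_on[OF tri] by (rule inj_on_subset[rotated])
  show "ext_eval n w ` ext_carrier n (Lam n) = LamOmega n"
    using ext_eval_in_LamOmega[OF inv] LamOmega_in_image_ext_eval[OF tri inv] by blast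
qed

lemma ext_eval_one: "ext_eval n w ext_one = ext_one"
proof
  fix U
  have "ext_eval n w ext_one U = ext_one {} * ext_monom w {} U"
    unfolding ext_eval_apply by (rule sum_eq_single) (auto simp: ext_one_def)
  then show "ext_eval n w ext_one U = ext_one U"
    by (simp add: ext_one_def)
qed

lemma ext_eval_ext_add: "ext_eval n w (ext_add c d) = ext_add (ext_eval n w c) (ext_eval n w d)"
  by (simp add: ext_add_def ext_eval_add)

section \<open>An invariant triangular family\<close>

lemma ext_s_singleton:
  "ext_s i f {l} =
    swap_vars i (f {l}) + (if l = i + 1 then (Var i - Var (i + 1)) * swap_vars i (f {i}) else 0)"
  by (auto simp: ext_s_def)

lemma ext_s_odd_elem_nonsingleton:
  assumes "odd_elem f" "\<nexists>l. U = {l}"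
  shows "ext_s i f U = 0"
proof -
  have "f (insert i (U - {i + 1})) = 0" if "i + 1 \<in> U" "i \<notin> U"
  proof -
    have "\<nexists>l. insert i (U - {i + 1}) = {l}"
    proof
      assume "\<exists>l. insert i (U - {i + 1}) = {l}"
      then have "U - {i + 1} \<subseteq> {i}"
        by auto
      then have "U = {i + 1}"
        using that by auto
      then show False
        using assms(2) by blast
    qed
    then show ?thesis
      using assms(1) by (auto simp: odd_elem_def)
  qed
  moreover have "f U = 0"
    using assms by (auto simp: odd_elem_def)
  ultimately show ?thesis
    by (simp add: ext_s_def)
qed

lemma odd_elem_ext_s_eqI:
  assumes odd: "odd_elem f"
    and fixed: "\<And>l. l \<noteq> i + 1 \<Longrightarrow> swap_vars i (f {l}) = f {l}"
    and shifted: "f {i + 1} = swap_vars i (f {i + 1}) + (Var i - Var (i + 1)) * swap_vars i (f {i})"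
  shows "ext_s i f = f"
proof
  fix U
  show "ext_s i f U = f U"
  proof (cases "\<exists>l. U = {l}")
    case True
    then show ?thesis
      using fixed shifted by (auto simp: ext_s_singleton)
  next
    case False
    then show ?thesis
      using odd ext_s_odd_elem_nonsingleton[OF odd False] by (auto simp: odd_elem_def)
  qed
qed

fun esym :: "nat \<Rightarrow> nat \<Rightarrow> mpoly" where
  "esym 0 m = 1"
| "esym (Suc k) 0 = 0"
| "esym (Suc k) (Suc m) = esym (Suc k) m + Var (Suc m) * esym k m"

lemma esym_in_Pn: "m \<le> n \<Longrightarrow> esym k m \<in> Pn n"
  by (induction k m rule: esym.induct) auto

lemma swap_vars_esym_above: "m < j \<Longrightarrow> swap_vars j (esym k m) = esym k m"
proof (induction k m rule: esym.induct)
  case (3 k m)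
  then have "tr j (Suc m) = Suc m"
    by (auto simp: tr_def)
  then show ?case
    using 3 by simp
qed auto

lemma swap_vars_esym_below: "1 \<le> j \<Longrightarrow> j < m \<Longrightarrow> swap_vars j (esym k m) = esym k m"
proof (induction m arbitrary: k)
  case (Suc m)
  show ?case
  proof (cases k)
    case (Suc k')
    show ?thesis
    proof (cases "j < m")
      case True
      then have "tr j (Suc m) = Suc m"
        by (auto simp: tr_def)
      then show ?thesis
        using Suc.IH[OF Suc.prems(1) True] \<open>k = Suc k'\<close> by simp
    next
      case False
      then have "j = m"
        using Suc.prems by simp
      then obtain m' where m': "m = Suc m'"
        using Suc.prems by (cases m) auto
      have fixed: "swap_vars j (esym q m') = esym q m'" for q
        using \<open>j = m\<close> m' by (intro swap_vars_esym_above) simp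
      have "tr j (Suc m) = m" "tr j m = Suc m"
        using \<open>j = m\<close> by (auto simp: tr_def)
      then show ?thesis
        using fixed m' \<open>k = Suc k'\<close>
        by (cases k') (simp_all add: algebra_simps)
    qed
  qed simp
qed simp

lemma swap_vars_esym: "1 \<le> j \<Longrightarrow> j \<noteq> m \<Longrightarrow> swap_vars j (esym k m) = esym k m"
  using swap_vars_esym_above swap_vars_esym_below by (cases "j < m") auto

lemma esym_Suc_eq_swap:
  assumes "1 \<le> m"
  shows "esym (Suc k) m = swap_vars m (esym (Suc k) m) + (Var m - Var (m + 1)) * esym k (m - 1)"
proof -
  obtain m' where m': "m = Suc m'"
    using assms by (cases m) auto
  have "swap_vars m (esym q m') = esym q m'" for q
    using m' by (intro swap_vars_esym_above) simp
  moreover have "tr m m = Suc m"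
    by (simp add: tr_def)
  ultimately show ?thesis
    using m' by (simp add: algebra_simps)
qed

definition esym_family :: "nat \<Rightarrow> nat \<Rightarrow> ext" where
  "esym_family n i =
    ext_add (ext_gen i) (\<lambda>S. \<Sum>j\<in>{i<..n}. ext_scale (esym (j - i) (j - 1)) (ext_gen j) S)"

lemma triangular_family_esym_family: "triangular_family n (esym_family n)"
  unfolding triangular_family_def
proof
  fix i assume "i \<in> {1..n}"
  let ?c = "\<lambda>j. if j \<le> n then esym (j - i) (j - 1) else 0"
  have "(\<lambda>S. \<Sum>j\<in>{i<..n}. ext_scale (esym (j - i) (j - 1)) (ext_gen j) S) =
      (\<lambda>S. \<Sum>j\<in>{i<..n}. ext_scale (?c j) (ext_gen j) S)"
    by (intro ext sum.cong) auto
  moreover have "\<forall>j. ?c j \<in> Pn n"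
    by (simp add: esym_in_Pn)
  ultimately show "\<exists>c. (\<forall>j. c j \<in> Pn n) \<and>
      esym_family n i = ext_add (ext_gen i) (\<lambda>S. \<Sum>j\<in>{i<..n}. ext_scale (c j) (ext_gen j) S)"
    unfolding esym_family_def by (intro exI[of _ ?c]) simp
qed

lemma esym_family_singleton:
  assumes "i \<le> n"
  shows "esym_family n i {l} = (if i \<le> l \<and> l \<le> n then esym (l - i) (l - 1) else 0)"
proof -
  have "(\<Sum>j\<in>{i<..n}. esym (j - i) (j - 1) * (if {l} = {j} then 1 else 0)) =
      (if l \<in> {i<..n} then esym (l - i) (l - 1) else 0)"
    by (simp add: if_distrib[of "\<lambda>x. _ * x"] cong: if_cong)
  then show ?thesis
    using assms by (auto simp: esym_family_def ext_add_def ext_scale_def ext_gen_def)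
qed

lemma odd_elem_esym_family: "odd_elem (esym_family n i)"
  unfolding odd_elem_def
proof (intro allI impI)
  fix S assume "esym_family n i S \<noteq> 0"
  moreover have "esym_family n i S = 0" if "\<nexists>j. S = {j}"
    using that by (simp add: esym_family_def ext_add_def ext_scale_def ext_gen_def)
  ultimately show "\<exists>j. S = {j}"
    by blast
qed

lemma esym_family_in_carrier:
  assumes i: "i \<in> {1..n}"
  shows "esym_family n i \<in> ext_carrier n (Pn n)"
  unfolding ext_carrier_def
proof (intro CollectI allI conjI impI)
  fix S
  have nonsingleton: "esym_family n i S = 0" if "\<nexists>l. S = {l}"
    using odd_elem_esym_family that by (auto simp: odd_elem_def)
  show "esym_family n i S \<in> Pn n"
  proof (cases "\<exists>l. S = {l}")
    case True
    then show ?thesis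
      using i by (auto simp: esym_family_singleton esym_in_Pn)
  qed (simp add: nonsingleton)
  show "esym_family n i S = 0" if "\<not> S \<subseteq> {1..n}"
  proof (cases "\<exists>l. S = {l}")
    case True
    then show ?thesis
      using i that by (auto simp: esym_family_singleton split: if_splits)
  qed (simp add: nonsingleton)
qed

lemma esym_family_invariant:
  assumes i: "i \<in> {1..n}" and k: "1 \<le> k" "k < n"
  shows "ext_s k (esym_family n i) = esym_family n i"
proof -
  let ?f = "esym_family n i"
  have singleton: "?f {l} = (if i \<le> l \<and> l \<le> n then esym (l - i) (l - 1) else 0)" for l
    using i by (simp add: esym_family_singleton)
  show ?thesis
  proof (rule odd_elem_ext_s_eqI[OF odd_elem_esym_family])
    fix l assume "l \<noteq> k + 1"
    then show "swap_vars k (?f {l}) = ?f {l}"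
      using i k by (auto simp: singleton intro: swap_vars_esym)
  next
    consider "i \<le> k" | "i = k + 1" | "k + 1 < i"
      by linarith
    then show "?f {k + 1} = swap_vars k (?f {k + 1}) + (Var k - Var (k + 1)) * swap_vars k (?f {k})"
    proof cases
      case 1
      have "swap_vars k (esym (k - i) (k - 1)) = esym (k - i) (k - 1)"
        using k by (intro swap_vars_esym_above) simp
      moreover have "Suc k - i = Suc (k - i)"
        using 1 by simp
      ultimately show ?thesis
        using 1 k esym_Suc_eq_swap[of k "k - i"] by (simp add: singleton)
    qed (use k singleton[of k] singleton[of "k + 1"] in simp_all)
  qed
qed

lemma esym_family_in_LamOmega: "i \<in> {1..n} \<Longrightarrow> esym_family n i \<in> LamOmega n"
  by (simp add: LamOmega_def esym_family_in_carrier esym_family_invariant)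

theorem theorem3p1:
  fixes n :: nat
  shows "(\<exists>(I :: nat set set) (b :: nat set \<Rightarrow> ext).
            finite I \<and> card I = 2 ^ n \<and> (\<forall>S \<in> I. b S \<in> LamOmega n) \<and>
            bij_betw (\<lambda>c. (\<lambda>U. \<Sum>S \<in> I. ext_scale (c S) (b S) U))
              {c. (\<forall>S \<in> I. c S \<in> Lam n) \<and> (\<forall>S. S \<notin> I \<longrightarrow> c S = 0)}
              (LamOmega n))
      \<and> (\<exists>w. triangular_family n w \<and> (\<forall>i \<in> {1..n}. w i \<in> LamOmega n))
      \<and> (\<forall>w. triangular_family n w \<and> (\<forall>i \<in> {1..n}. w i \<in> LamOmega n) \<longrightarrow>
            bij_betw (ext_eval n w) (ext_carrier n (Lam n)) (LamOmega n) \<and>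
            ext_eval n w ext_one = ext_one \<and>
            (\<forall>c \<in> ext_carrier n (Lam n). \<forall>d \<in> ext_carrier n (Lam n).
               ext_eval n w (ext_add c d) = ext_add (ext_eval n w c) (ext_eval n w d) \<and>
               ext_eval n w (ext_mult c d) = ext_mult (ext_eval n w c) (ext_eval n w d)))"
proof -
  let ?w = "esym_family n"
  have w: "triangular_family n ?w" "\<forall>i \<in> {1..n}. ?w i \<in> LamOmega n"
    by (simp_all add: triangular_family_esym_family esym_family_in_LamOmega)
  have "{c. (\<forall>S \<in> Pow {1..n}. c S \<in> Lam n) \<and> (\<forall>S. S \<notin> Pow {1..n} \<longrightarrow> c S = 0)} =
      ext_carrier n (Lam n)"
    by (auto simp: ext_carrier_def)
  then have "bij_betw (\<lambda>c. (\<lambda>U. \<Sum>S \<in> Pow {1..n}. ext_scale (c S) (ext_monom ?w S) U))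
      {c. (\<forall>S \<in> Pow {1..n}. c S \<in> Lam n) \<and> (\<forall>S. S \<notin> Pow {1..n} \<longrightarrow> c S = 0)} (LamOmega n)"
    using triangular_eval_bij_betw[OF w] by (simp add: ext_eval_def[abs_def])
  moreover have "\<forall>S \<in> Pow {1..n}. ext_monom ?w S \<in> LamOmega n"
    using ext_monom_in_LamOmega[OF w(2)] by blast
  moreover have "bij_betw (ext_eval n w) (ext_carrier n (Lam n)) (LamOmega n) \<and>
      ext_eval n w ext_one = ext_one \<and>
      (\<forall>c d. ext_eval n w (ext_add c d) = ext_add (ext_eval n w c) (ext_eval n w d) \<and>
         ext_eval n w (ext_mult c d) = ext_mult (ext_eval n w c) (ext_eval n w d))"
    if "triangular_family n w" "\<forall>i \<in> {1..n}. w i \<in> LamOmega n" for w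
    using triangular_eval_bij_betw[OF that] ext_eval_mult[OF triangular_family_odd[OF that(1)]]
    by (simp add: ext_eval_one ext_eval_ext_add)
  ultimately show ?thesis
    using w by (intro conjI exI[of _ "Pow {1..n}"] exI[of _ "ext_monom ?w"]) (auto simp: card_Pow)
qed

end
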